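(* Let $G$ be a solvable group and let $H$ be a subgroup of $G$ with $H\le G'$ (i.e. $r_{ab}(H)=0$). If $H$ is verbally closed in $G$, then $H=1$.
   Context: $G'$ is the derived subgroup of $G$. A subgroup $H\le G$ is verbally closed in $G$ if for every group word $w(x_1,\dots,x_n)$ (without constants) and every $h\in H$, if the equation $w(x_1,\dots,x_n)=h$ has a solution in $G$, then it has a solution in $H$. *)

theory Defs
  imports "HOL-Algebra.Solvable_Groups"
begin

text \<open>A group word w(x_1,...,x_n) without constants: a list of letters; a letter (i, True)
  stands for x_i and (i, False) for x_i^{-1}.  Unreduced words are allowed; they define
  the same word maps as their free reductions.\<close>
type_synonym word = "(nat \<times> bool) list"

fun word_eval :: "('a, 'b) monoid_scheme \<Rightarrow> word \<Rightarrow> (nat \<Rightarrow> 'a) \<Rightarrow> 'a" where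
  "word_eval G [] f = \<one>\<^bsub>G\<^esub>"
| "word_eval G ((i, e) # w) f =
     (if e then f i else inv\<^bsub>G\<^esub> (f i)) \<otimes>\<^bsub>G\<^esub> word_eval G w f"

definition has_solution_in :: "('a, 'b) monoid_scheme \<Rightarrow> 'a set \<Rightarrow> word \<Rightarrow> 'a \<Rightarrow> bool" where
  "has_solution_in G S w h \<longleftrightarrow> (\<exists>f. (\<forall>i. f i \<in> S) \<and> word_eval G w f = h)"

definition verbally_closed :: "('a, 'b) monoid_scheme \<Rightarrow> 'a set \<Rightarrow> bool" where
  "verbally_closed G H \<longleftrightarrow>
     (\<forall>w. \<forall>h\<in>H. has_solution_in G (carrier G) w h \<longrightarrow> has_solution_in G H w h)"

end

theory Submission
  imports Defs
begin

text \<open>Every element of \<open>G'\<close> is the value of a product of commutators \<open>w\<close>, and such a word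
  takes all its values on a subgroup \<open>T\<close> inside \<open>T'\<close>. If \<open>H \<le> G'\<close> is verbally closed, each
  \<open>h \<in> H\<close> solves some equation \<open>w = h\<close> in \<open>G\<close>, hence in \<open>H\<close>, so \<open>H \<le> H'\<close>. Iterating,
  \<open>H\<close> lies in every term of the derived series of \<open>G\<close>, which reaches \<open>1\<close> when \<open>G\<close> is solvable.\<close>

definition commutator_word :: "nat \<Rightarrow> nat \<Rightarrow> word" where
  "commutator_word i j = [(i, True), (j, True), (i, False), (j, False)]"

definition derived_word :: "('a, 'b) monoid_scheme \<Rightarrow> word \<Rightarrow> bool" where
  "derived_word G w \<longleftrightarrow>
     (\<forall>T f. subgroup T G \<longrightarrow> (\<forall>i. f i \<in> T) \<longrightarrow> word_eval G w f \<in> derived G T)"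

lemma word_eval_rename:
  "word_eval G (map (\<lambda>(i, e). (g i, e)) w) f = word_eval G w (f \<circ> g)"
  by (induction w) auto

lemma (in group) word_eval_closed:
  assumes "\<forall>i. f i \<in> carrier G"
  shows "word_eval G w f \<in> carrier G"
  using assms by (induction w) auto

lemma (in group) word_eval_append:
  assumes "\<forall>i. f i \<in> carrier G"
  shows "word_eval G (w1 @ w2) f = word_eval G w1 f \<otimes> word_eval G w2 f"
  using assms by (induction w1) (auto simp: word_eval_closed m_assoc)

lemma (in group) word_eval_commutator_word:
  assumes "f i \<in> carrier G" "f j \<in> carrier G"
  shows "word_eval G (commutator_word i j) f = f i \<otimes> f j \<otimes> inv (f i) \<otimes> inv (f j)"
  using assms by (simp add: commutator_word_def m_assoc)

lemma derived_word_rename: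
  "derived_word G w \<Longrightarrow> derived_word G (map (\<lambda>(i, e). (g i, e)) w)"
  unfolding derived_word_def word_eval_rename by auto

lemma (in group) derived_word_Nil: "derived_word G []"
  unfolding derived_word_def derived_def by (simp add: generate.one)

lemma (in group) derived_word_commutator_word: "derived_word G (commutator_word i j)"
  unfolding derived_word_def
proof (intro allI impI)
  fix T and f :: "nat \<Rightarrow> 'a"
  assume T: "subgroup T G" and f: "\<forall>i. f i \<in> T"
  then have "f i \<in> carrier G" "f j \<in> carrier G"
    using subgroup.subset[OF T] by blast+
  then have "word_eval G (commutator_word i j) f = f i \<otimes> f j \<otimes> inv (f i) \<otimes> inv (f j)"
    by (rule word_eval_commutator_word)
  also have "\<dots> \<in> derived G T"
    unfolding derived_def using f by (intro generate.incl) blast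
  finally show "word_eval G (commutator_word i j) f \<in> derived G T" .
qed

lemma (in group) derived_word_append:
  assumes "derived_word G w1" "derived_word G w2"
  shows "derived_word G (w1 @ w2)"
  unfolding derived_word_def
proof (intro allI impI)
  fix T and f :: "nat \<Rightarrow> 'a"
  assume T: "subgroup T G" and f: "\<forall>i. f i \<in> T"
  then have "\<forall>i. f i \<in> carrier G"
    using subgroup.subset[OF T] by blast
  then have "word_eval G (w1 @ w2) f = word_eval G w1 f \<otimes> word_eval G w2 f"
    by (rule word_eval_append)
  moreover have "word_eval G w1 f \<in> derived G T" "word_eval G w2 f \<in> derived G T"
    using assms T f unfolding derived_word_def by blast+
  moreover have "subgroup (derived G T) G"
    using derived_is_subgroup[OF subgroup.subset[OF T]] .
  ultimately show "word_eval G (w1 @ w2) f \<in> derived G T"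
    by (simp add: subgroup.m_closed)
qed

lemma (in group) ex_derived_word_value:
  assumes "x \<in> derived G S" "subgroup S G"
  shows "\<exists>w f. derived_word G w \<and> (\<forall>i. f i \<in> S) \<and> word_eval G w f = x"
  using assms(1) unfolding derived_def
proof (induction rule: generate.induct)
  case one
  have "\<forall>i::nat. \<one> \<in> S"
    using assms(2) subgroup.one_closed by blast
  then show ?case
    using derived_word_Nil by fastforce
next
  case (incl h)
  then obtain a b where ab: "a \<in> S" "b \<in> S" "h = a \<otimes> b \<otimes> inv a \<otimes> inv b"
    by blast
  let ?f = "\<lambda>i::nat. if i = 0 then a else b"
  have "word_eval G (commutator_word 0 1) ?f = h"
    using ab assms(2) subgroup.subset by (subst word_eval_commutator_word) auto
  then show ?case
    using ab derived_word_commutator_word by (intro exI[of _ "commutator_word 0 1"] exI[of _ ?f]) simp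
next
  case (inv h)
  then obtain a b where ab: "a \<in> S" "b \<in> S" "h = a \<otimes> b \<otimes> inv a \<otimes> inv b"
    by blast
  then have abG: "a \<in> carrier G" "b \<in> carrier G"
    using assms(2) subgroup.subset by blast+
  let ?f = "\<lambda>i::nat. if i = 0 then a else b"
  have "word_eval G (commutator_word 1 0) ?f = b \<otimes> a \<otimes> inv b \<otimes> inv a"
    using abG by (subst word_eval_commutator_word) auto
  also have "\<dots> = inv h"
    using ab(3) abG by (simp add: inv_mult_group m_assoc)
  finally show ?case
    using ab derived_word_commutator_word by (intro exI[of _ "commutator_word 1 0"] exI[of _ ?f]) simp
next
  case (eng h1 h2)
  then obtain w1 f1 w2 f2 where
    1: "derived_word G w1" "\<forall>i. f1 i \<in> S" "word_eval G w1 f1 = h1" and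
    2: "derived_word G w2" "\<forall>i. f2 i \<in> S" "word_eval G w2 f2 = h2"
    by blast
  let ?w = "map (\<lambda>(i, e). (2 * i, e)) w1 @ map (\<lambda>(i, e). (2 * i + 1, e)) w2"
  let ?f = "\<lambda>i. if even i then f1 (i div 2) else f2 (i div 2)"
  have fS: "\<forall>i. ?f i \<in> S"
    using 1 2 by simp
  then have fG: "\<forall>i. ?f i \<in> carrier G"
    using assms(2) subgroup.subset by blast
  have "?f \<circ> (\<lambda>i. 2 * i) = f1" "?f \<circ> (\<lambda>i. 2 * i + 1) = f2"
    by auto
  then have "word_eval G ?w ?f = h1 \<otimes> h2"
    unfolding word_eval_append[OF fG] word_eval_rename using 1(3) 2(3) by simp
  moreover have "derived_word G ?w"
    using 1 2 by (intro derived_word_append derived_word_rename)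
  ultimately show ?case
    using fS by (intro exI[of _ ?w] exI[of _ ?f]) simp
qed

lemma (in group) verbally_closed_subset_derived:
  assumes "verbally_closed G H" "subgroup H G" "H \<subseteq> derived G (carrier G)"
  shows "H \<subseteq> derived G H"
proof
  fix h assume h: "h \<in> H"
  then have "h \<in> derived G (carrier G)"
    using assms(3) by blast
  then obtain w f where w: "derived_word G w" and "\<forall>i. f i \<in> carrier G" "word_eval G w f = h"
    using ex_derived_word_value[OF _ subgroup_self] by blast
  then have "has_solution_in G (carrier G) w h"
    unfolding has_solution_in_def by blast
  then have "has_solution_in G H w h"
    using assms(1) h unfolding verbally_closed_def by blast
  then obtain f' where "\<forall>i. f' i \<in> H" "word_eval G w f' = h"
    unfolding has_solution_in_def by blast
  with w assms(2) show "h \<in> derived G H"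
    unfolding derived_word_def by blast
qed

lemma (in group) subset_derived_imp_subset_exp_of_derived:
  assumes "H \<subseteq> derived G H"
  shows "H \<subseteq> (derived G ^^ n) H"
proof (induction n)
  case (Suc n)
  have "derived G H \<subseteq> derived G ((derived G ^^ n) H)"
    using Suc.IH by (rule mono_derived)
  then show ?case
    using assms by simp
qed simp

theorem proposition1:
  fixes G :: "('a, 'b) monoid_scheme" and H :: "'a set"
  assumes "group G"
    and "solvable G"
    and "subgroup H G"
    and "H \<subseteq> derived G (carrier G)"
    and "verbally_closed G H"
  shows "H = {\<one>\<^bsub>G\<^esub>}"
proof -
  interpret group G by fact
  obtain n where n: "(derived G ^^ n) (carrier G) = {\<one>\<^bsub>G\<^esub>}"
    using assms(2) solvable_iff_trivial_derived_seq by blast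
  have "H \<subseteq> (derived G ^^ n) H"
    using verbally_closed_subset_derived[OF assms(5,3,4)]
    by (rule subset_derived_imp_subset_exp_of_derived)
  also have "\<dots> \<subseteq> (derived G ^^ n) (carrier G)"
    using subgroup.subset[OF assms(3)] by (rule mono_exp_of_derived)
  finally show ?thesis
    using n subgroup.one_closed[OF assms(3)] by blast
qed

end
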